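(* If $\mathbf c_1,\mathbf c_2\in\mathrm{GF}(q^m)^n$ and $d_{\mathrm R}(\mathbf c_1,\mathbf c_2)=r$, then $$|B_r(\mathbf c_1)\cap B_1(\mathbf c_2)|=1+(q^m-q^r){r\brack 1}+(q^r-1){n\brack 1}.$$
   Context: The rank $\mathrm{rk}(\mathbf x)$ of $\mathbf x\in\mathrm{GF}(q^m)^n$ is the maximum number of its coordinates linearly independent over $\mathrm{GF}(q)$, and $d_{\mathrm R}(\mathbf x,\mathbf y)=\mathrm{rk}(\mathbf x-\mathbf y)$. $B_r(\mathbf x)$ is the set of vectors within rank distance $r$ of $\mathbf x$. ${n\brack u}$ denotes the Gaussian binomial coefficient (number of $u$-dimensional subspaces of $\mathrm{GF}(q)^n$); in particular ${n\brack 1}=(q^n-1)/(q-1)$. *)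

theory Defs
  imports "HOL-Analysis.Analysis"
begin

text \<open>K is a subfield of the (finite) field 'a; it plays the role of GF(q) inside GF(q^m).\<close>
definition is_subfield :: "'a::field set \<Rightarrow> bool" where
  "is_subfield K \<longleftrightarrow> 0 \<in> K \<and> 1 \<in> K \<and>
     (\<forall>x\<in>K. \<forall>y\<in>K. x + y \<in> K \<and> x - y \<in> K \<and> x * y \<in> K) \<and>
     (\<forall>x\<in>K. inverse x \<in> K)"

definition lin_indep_over :: "'a::field set \<Rightarrow> ('i \<Rightarrow> 'a) \<Rightarrow> 'i set \<Rightarrow> bool" where
  "lin_indep_over K v S \<longleftrightarrow>
     (\<forall>c. (\<forall>i\<in>S. c i \<in> K) \<and> (\<Sum>i\<in>S. c i * v i) = 0 \<longrightarrow> (\<forall>i\<in>S. c i = 0))"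

definition rk :: "'a::field set \<Rightarrow> 'a ^ 'n::finite \<Rightarrow> nat" where
  "rk K x = Max {card S | S. lin_indep_over K (\<lambda>i. x $ i) S}"

definition rank_dist :: "'a::field set \<Rightarrow> 'a ^ 'n::finite \<Rightarrow> 'a ^ 'n \<Rightarrow> nat" where
  "rank_dist K x y = rk K (x - y)"

definition rank_ball :: "'a::field set \<Rightarrow> nat \<Rightarrow> 'a ^ 'n::finite \<Rightarrow> ('a ^ 'n) set" where
  "rank_ball K r x = {y. rank_dist K x y \<le> r}"

definition gauss_binom1 :: "nat \<Rightarrow> nat \<Rightarrow> int" where
  "gauss_binom1 q k = (int q ^ k - 1) div (int q - 1)"

end

theory Submission
  imports Defs
begin

text \<open>
  Put x = c1 - c2. Translating by c2, the intersection of the two balls corresponds to the vectors e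
  with rk e \<le> 1 and rk (x - e) \<le> r. A nonzero e of rank at most 1 is a *s u with a \<noteq> 0 and
  u a nonzero vector over K, in exactly q - 1 ways. Let V be the K-span of the coordinates of x,
  which has q^r elements. If a \<in> V, all coordinates of x - a *s u lie in V, so its rank is at
  most r. If a \<notin> V, the rank stays at most r exactly when u satisfies every K-linear relation
  among the coordinates of x, which leaves q^r choices of u; otherwise a maximal independent set
  of coordinates of x together with one coordinate violating such a relation is independent in
  x - a *s u. This gives (q^r - 1)(q^n - 1) + (q^m - q^r)(q^r - 1) representations, and dividing
  by q - 1 gives the formula.
\<close>

definition span_over :: "'a::field set \<Rightarrow> ('i \<Rightarrow> 'a) \<Rightarrow> 'i set \<Rightarrow> 'a set" where
  "span_over K f T = {(\<Sum>i\<in>T. c i * f i) | c. \<forall>i\<in>T. c i \<in> K}"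

definition vecs_over :: "'a set \<Rightarrow> ('a ^ 'n) set" where
  "vecs_over K = {u. \<forall>j. u $ j \<in> K}"

lemma card_eq_mult_card_image:
  assumes "finite A" and "\<And>a. a \<in> A \<Longrightarrow> card {a' \<in> A. f a' = f a} = k"
  shows "card A = k * card (f ` A)"
proof -
  have "card A = card (\<Union>b\<in>f ` A. {a \<in> A. f a = b})" by (rule arg_cong[of _ _ card]) auto
  also have "\<dots> = (\<Sum>b\<in>f ` A. card {a \<in> A. f a = b})"
    by (rule card_UN_disjoint) (use assms(1) in auto)
  also have "\<dots> = (\<Sum>b\<in>f ` A. k)" using assms(2) by (intro sum.cong) auto
  finally show ?thesis by simp
qed

lemma sum_delta_mult:
  fixes g :: "'i \<Rightarrow> 'a::semiring_1"
  assumes "finite S" "j \<in> S"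
  shows "(\<Sum>i\<in>S. (if i = j then 1 else 0) * g i) = g j"
proof -
  have "(\<Sum>i\<in>S. (if i = j then 1 else 0) * g i) = (\<Sum>i\<in>S. if i = j then g i else 0)"
    by (rule sum.cong) auto
  with assms show ?thesis by simp
qed

lemma lin_indep_overD:
  "lin_indep_over K g S \<Longrightarrow> \<forall>i\<in>S. c i \<in> K \<Longrightarrow> (\<Sum>i\<in>S. c i * g i) = 0 \<Longrightarrow> i \<in> S \<Longrightarrow> c i = 0"
  unfolding lin_indep_over_def by blast

lemma finite_indep_cards:
  fixes x :: "'a::field ^ 'n"
  shows "finite {card S | S. lin_indep_over K (\<lambda>i. x $ i) S}"
  by (rule finite_subset[of _ "{..CARD('n)}"]) (auto intro: card_mono)

lemma card_le_rk: "lin_indep_over K (\<lambda>i. x $ i) S \<Longrightarrow> card S \<le> rk K x"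
  unfolding rk_def by (rule Max_ge[OF finite_indep_cards]) blast

lemma rk_witness: obtains S where "lin_indep_over K (\<lambda>i. x $ i) S" "card S = rk K x"
proof -
  have "lin_indep_over K (\<lambda>i. x $ i) {}" by (simp add: lin_indep_over_def)
  then have "{card S | S. lin_indep_over K (\<lambda>i. x $ i) S} \<noteq> {}" by blast
  from Max_in[OF finite_indep_cards this] show ?thesis using that unfolding rk_def by force
qed

lemma rk_uminus [simp]: "rk K (- x) = rk K x"
proof -
  have "lin_indep_over K (\<lambda>i. (- x) $ i) S = lin_indep_over K (\<lambda>i. x $ i) S" for S
    unfolding lin_indep_over_def by (simp add: sum_negf)
  then show ?thesis unfolding rk_def by (simp only:)
qed

lemma rk_diff_commute: "rk K (x - y) = rk K (y - x)"
  by (metis minus_diff_eq rk_uminus)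

lemma rank_ball_inter_eq_translate:
  "rank_ball K r c1 \<inter> rank_ball K s c2 = (\<lambda>e. c2 + e) ` {e. rk K e \<le> s \<and> rk K (c1 - c2 - e) \<le> r}"
    (is "_ = _ ` ?E")
proof -
  have "c1 - y = c1 - c2 - (y - c2)" for y :: "'a ^ 'b" by simp
  then have "rank_ball K r c1 \<inter> rank_ball K s c2 = {y. y - c2 \<in> ?E}"
    unfolding rank_ball_def rank_dist_def by (auto simp: rk_diff_commute[of K c2])
  also have "\<dots> = (\<lambda>e. c2 + e) ` ?E" by (auto simp: diff_diff_eq intro: image_eqI[of _ _ "_ - c2"])
  finally show ?thesis .
qed

locale subfield =
  fixes K :: "'a::field set"
  assumes subfield: "is_subfield K"
begin

lemma zero_mem [simp]: "0 \<in> K" and one_mem [simp]: "1 \<in> K"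
  and add_mem: "x \<in> K \<Longrightarrow> y \<in> K \<Longrightarrow> x + y \<in> K"
  and diff_mem: "x \<in> K \<Longrightarrow> y \<in> K \<Longrightarrow> x - y \<in> K"
  and mult_mem: "x \<in> K \<Longrightarrow> y \<in> K \<Longrightarrow> x * y \<in> K"
  and inverse_mem: "x \<in> K \<Longrightarrow> inverse x \<in> K"
  using subfield by (auto simp: is_subfield_def)

lemma divide_mem: "x \<in> K \<Longrightarrow> y \<in> K \<Longrightarrow> x / y \<in> K"
  by (simp add: divide_inverse mult_mem inverse_mem)

lemma uminus_mem: "x \<in> K \<Longrightarrow> - x \<in> K"
  using diff_mem[OF zero_mem] by fastforce

lemma sum_mem: "(\<And>i. i \<in> S \<Longrightarrow> g i \<in> K) \<Longrightarrow> sum g S \<in> K"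
  by (induction S rule: infinite_finite_induct) (auto intro: add_mem)

lemma span_over_zero [simp]: "0 \<in> span_over K f T"
  unfolding span_over_def by (auto intro!: exI[of _ "\<lambda>_. 0"])

lemma span_over_add:
  assumes "x \<in> span_over K f T" "y \<in> span_over K f T"
  shows "x + y \<in> span_over K f T"
proof -
  obtain c d where "x = (\<Sum>i\<in>T. c i * f i)" "\<forall>i\<in>T. c i \<in> K"
    and "y = (\<Sum>i\<in>T. d i * f i)" "\<forall>i\<in>T. d i \<in> K"
    using assms unfolding span_over_def by blast
  then show ?thesis unfolding span_over_def
    by (intro CollectI exI[of _ "\<lambda>i. c i + d i"]) (auto simp: add_mem distrib_right sum.distrib)
qed

lemma span_over_mult:
  assumes "x \<in> span_over K f T" "k \<in> K"
  shows "k * x \<in> span_over K f T"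
proof -
  obtain c where "x = (\<Sum>i\<in>T. c i * f i)" "\<forall>i\<in>T. c i \<in> K"
    using assms unfolding span_over_def by blast
  then show ?thesis unfolding span_over_def using assms(2)
    by (intro CollectI exI[of _ "\<lambda>i. k * c i"]) (auto simp: mult_mem sum_distrib_left mult.assoc)
qed

lemma span_over_diff:
  assumes "x \<in> span_over K f T" "y \<in> span_over K f T"
  shows "x - y \<in> span_over K f T"
  using span_over_add[OF assms(1) span_over_mult[OF assms(2), of "-1"]] by (simp add: uminus_mem)

lemma span_over_lincomb:
  "(\<And>i. i \<in> S \<Longrightarrow> c i \<in> K \<and> g i \<in> span_over K f T) \<Longrightarrow> (\<Sum>i\<in>S. c i * g i) \<in> span_over K f T"
  by (induction S rule: infinite_finite_induct) (auto intro: span_over_add span_over_mult)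

lemma span_over_mono:
  "(\<And>i. i \<in> S \<Longrightarrow> g i \<in> span_over K f T) \<Longrightarrow> span_over K g S \<subseteq> span_over K f T"
  by (auto simp: span_over_def[of K g S] intro!: span_over_lincomb)

lemma span_over_eq_image:
  "span_over K f T = (\<lambda>c. \<Sum>i\<in>T. c i * f i) ` (T \<rightarrow>\<^sub>E K)"
proof (intro equalityI subsetI)
  fix x assume "x \<in> span_over K f T"
  then obtain c where c: "x = (\<Sum>i\<in>T. c i * f i)" "\<forall>i\<in>T. c i \<in> K"
    unfolding span_over_def by blast
  show "x \<in> (\<lambda>c. \<Sum>i\<in>T. c i * f i) ` (T \<rightarrow>\<^sub>E K)"
    by (rule image_eqI[of _ _ "restrict c T"]) (use c in simp_all)
next
  fix x assume "x \<in> (\<lambda>c. \<Sum>i\<in>T. c i * f i) ` (T \<rightarrow>\<^sub>E K)"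
  then show "x \<in> span_over K f T" unfolding span_over_def by (blast dest: PiE_mem)
qed

lemma inj_on_lincomb_indep:
  assumes "lin_indep_over K g S"
  shows "inj_on (\<lambda>c. \<Sum>i\<in>S. c i * g i) (S \<rightarrow>\<^sub>E K)"
proof (rule inj_onI)
  fix v w assume v: "v \<in> S \<rightarrow>\<^sub>E K" and w: "w \<in> S \<rightarrow>\<^sub>E K"
    and eq: "(\<Sum>i\<in>S. v i * g i) = (\<Sum>i\<in>S. w i * g i)"
  have "\<forall>i\<in>S. v i - w i \<in> K" using v w by (blast intro: diff_mem dest: PiE_mem)
  moreover have "(\<Sum>i\<in>S. (v i - w i) * g i) = 0" using eq by (simp add: left_diff_distrib sum_subtractf)
  ultimately have "v i - w i = 0" if "i \<in> S" for i by (rule lin_indep_overD[OF assms _ _ that])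
  then show "v = w" using v w by (intro PiE_ext[OF v w]) simp
qed

lemma rk_le_1_imp_scale:
  assumes "rk K e \<le> 1" "e \<noteq> 0"
  obtains a u where "a \<noteq> 0" "u \<in> vecs_over K" "e = a *s u"
proof -
  obtain j where j: "e $ j \<noteq> 0" using assms(2) by (auto simp: vec_eq_iff)
  have "e $ i / e $ j \<in> K" for i
  proof (rule ccontr)
    assume not_in: "e $ i / e $ j \<notin> K"
    then have "i \<noteq> j" using j by auto
    moreover have "lin_indep_over K (\<lambda>i. e $ i) {i, j}"
      unfolding lin_indep_over_def
    proof (intro allI impI)
      fix c assume c: "(\<forall>k\<in>{i, j}. c k \<in> K) \<and> (\<Sum>k\<in>{i, j}. c k * e $ k) = 0"
      then have rel: "c i * e $ i + c j * e $ j = 0" using \<open>i \<noteq> j\<close> by simp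
      have "c i = 0"
      proof (rule ccontr)
        assume "c i \<noteq> 0"
        with rel j have "e $ i / e $ j = - c j / c i" by (simp add: field_simps add_eq_0_iff)
        moreover have "- c j / c i \<in> K" using c by (auto intro!: divide_mem uminus_mem)
        ultimately show False using not_in by simp
      qed
      with rel j show "\<forall>k\<in>{i, j}. c k = 0" by simp
    qed
    ultimately show False using card_le_rk assms(1) by fastforce
  qed
  then have "(\<chi> i. e $ i / e $ j) \<in> vecs_over K" by (simp add: vecs_over_def)
  moreover have "e = e $ j *s (\<chi> i. e $ i / e $ j)" using j by (simp add: vec_eq_iff)
  ultimately show thesis using j that by blast
qed

lemma maximal_indep_spans:
  assumes indep: "lin_indep_over K (\<lambda>i. x $ i) S" and card: "card S = rk K x"
  shows "x $ j \<in> span_over K (\<lambda>i. x $ i) S"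
proof (cases "j \<in> S")
  case True
  have "(\<Sum>i\<in>S. (if i = j then 1 else 0) * x $ i) = x $ j" using True by (simp add: sum_delta_mult)
  then show ?thesis unfolding span_over_def by (auto intro!: exI[of _ "\<lambda>i. if i = j then 1 else 0"])
next
  case False
  then have "card (insert j S) > rk K x" using card by (simp add: card_insert_if)
  then have "\<not> lin_indep_over K (\<lambda>i. x $ i) (insert j S)" using card_le_rk by fastforce
  then obtain d where d: "\<forall>i\<in>insert j S. d i \<in> K" "\<exists>i\<in>insert j S. d i \<noteq> 0"
    and rel: "d j * x $ j + (\<Sum>i\<in>S. d i * x $ i) = 0"
    using False unfolding lin_indep_over_def by auto
  have "d j \<noteq> 0"
  proof
    assume "d j = 0"
    with rel have "(\<Sum>i\<in>S. d i * x $ i) = 0" by simp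
    with indep d(1) have "\<forall>i\<in>S. d i = 0" by (auto intro: lin_indep_overD)
    with d(2) \<open>d j = 0\<close> show False by blast
  qed
  have "(\<Sum>i\<in>S. d i * x $ i) = - (d j * x $ j)" using rel by (simp add: add_eq_0_iff)
  then have "x $ j = (\<Sum>i\<in>S. (- d i / d j) * x $ i)"
    using \<open>d j \<noteq> 0\<close> by (simp add: sum_divide_distrib[symmetric] sum_negf)
  then show ?thesis unfolding span_over_def using d(1)
    by (auto intro!: exI[of _ "\<lambda>i. - d i / d j"] divide_mem uminus_mem)
qed

end

locale finite_subfield = subfield K for K :: "'a::{finite,field} set"
begin

lemma card_ge_2: "2 \<le> card K"
proof -
  have "card {0, 1::'a} \<le> card K" by (rule card_mono) auto
  then show ?thesis by simp
qed

lemma card_span_over_le: "finite T \<Longrightarrow> card (span_over K f T) \<le> card K ^ card T"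
  unfolding span_over_eq_image
  by (rule order.trans[OF card_image_le]) (simp_all add: card_funcsetE finite_PiE)

lemma card_span_over_indep:
  "finite S \<Longrightarrow> lin_indep_over K g S \<Longrightarrow> card (span_over K g S) = card K ^ card S"
  unfolding span_over_eq_image by (simp add: card_image inj_on_lincomb_indep card_funcsetE)

lemma rk_le_card_span:
  assumes "finite T" "\<And>j. y $ j \<in> span_over K f T"
  shows "rk K y \<le> card T"
proof -
  obtain S where S: "lin_indep_over K (\<lambda>i. y $ i) S" "card S = rk K y" by (rule rk_witness)
  have "card K ^ card S = card (span_over K (\<lambda>i. y $ i) S)"
    using card_span_over_indep[OF _ S(1)] by simp
  also have "\<dots> \<le> card (span_over K f T)"
    by (intro card_mono span_over_mono) (simp_all add: assms(2))
  also have "\<dots> \<le> card K ^ card T" by (rule card_span_over_le[OF assms(1)])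
  finally have "card S \<le> card T" using card_ge_2 by (simp add: power_le_imp_le_exp)
  with S(2) show ?thesis by simp
qed

lemma rk_scale_le_1:
  assumes "u \<in> vecs_over K"
  shows "rk K (a *s u) \<le> 1"
proof -
  have "(a *s u) $ j \<in> span_over K (\<lambda>_. a) {()}" for j
    using assms unfolding span_over_def vecs_over_def
    by (intro CollectI exI[of _ "\<lambda>_. u $ j"]) (simp add: mult.commute)
  then show ?thesis using rk_le_card_span[of "{()}"] by fastforce
qed

lemma card_vecs_over: "card (vecs_over K :: ('a ^ 'n) set) = card K ^ CARD('n)"
proof -
  have "vecs_over K = vec_nth -` (UNIV \<rightarrow>\<^sub>E K)" by (auto simp: vecs_over_def)
  moreover have "inj vec_nth" by (rule injI) (simp add: vec_eq_iff)
  moreover have "surj vec_nth" by (metis surjI vec_lambda_inverse UNIV_I)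
  ultimately have "card (vecs_over K :: ('a ^ 'n) set) = card (UNIV \<rightarrow>\<^sub>E K :: ('n \<Rightarrow> 'a) set)"
    by (metis card_vimage_inj top_greatest)
  then show ?thesis by (simp add: card_funcsetE)
qed

lemma scale_inverse_scale:
  fixes k :: 'a
  assumes "k \<noteq> 0" shows "(k * a) *s (inverse k *s u) = a *s u"
proof -
  have "k * a * inverse k = a" using assms by (simp add: field_simps)
  then show ?thesis by (simp add: vector_smult_assoc)
qed

lemma scale_eq_scale_iff:
  assumes "a \<noteq> 0" "u \<in> vecs_over K" "u \<noteq> 0" "v \<in> vecs_over K"
  shows "b *s v = a *s u \<longleftrightarrow> (\<exists>k\<in>K - {0}. b = k * a \<and> v = inverse k *s u)"
proof
  assume eq: "b *s v = a *s u"
  obtain j where "u $ j \<noteq> 0" using assms(3) by (auto simp: vec_eq_iff)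
  moreover have eq_i: "b * v $ i = a * u $ i" for i using eq by (simp add: vec_eq_iff)
  ultimately have "v $ j \<noteq> 0" "b \<noteq> 0" using assms(1) by (metis mult_eq_0_iff)+
  define k where "k = u $ j / v $ j"
  have "k \<in> K - {0}" unfolding k_def
    using assms(2,4) \<open>u $ j \<noteq> 0\<close> \<open>v $ j \<noteq> 0\<close> by (auto simp: vecs_over_def intro: divide_mem)
  moreover have "b = k * a" unfolding k_def using eq_i[of j] \<open>v $ j \<noteq> 0\<close> by (simp add: field_simps)
  moreover have "v = inverse k *s u"
    using eq_i \<open>b = k * a\<close> \<open>k \<in> K - {0}\<close> assms(1) by (simp add: vec_eq_iff field_simps)
  ultimately show "\<exists>k\<in>K - {0}. b = k * a \<and> v = inverse k *s u" by blast
next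
  assume "\<exists>k\<in>K - {0}. b = k * a \<and> v = inverse k *s u"
  then show "b *s v = a *s u" using scale_inverse_scale by blast
qed

lemma card_scale_fibre:
  assumes "a \<noteq> 0" "u \<in> vecs_over K" "u \<noteq> 0"
  shows "card {(b, v). v \<in> vecs_over K \<and> b *s v = a *s u} = card K - 1"
proof -
  have "{(b, v). v \<in> vecs_over K \<and> b *s v = a *s u} = (\<lambda>k. (k * a, inverse k *s u)) ` (K - {0})"
  proof (intro equalityI subsetI)
    fix p assume "p \<in> {(b, v). v \<in> vecs_over K \<and> b *s v = a *s u}"
    then obtain b v where p: "p = (b, v)" "v \<in> vecs_over K" "b *s v = a *s u" by blast
    then obtain k where "k \<in> K - {0}" "b = k * a" "v = inverse k *s u"
      using scale_eq_scale_iff[OF assms] by blast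
    with p(1) show "p \<in> (\<lambda>k. (k * a, inverse k *s u)) ` (K - {0})" by blast
  next
    fix p assume "p \<in> (\<lambda>k. (k * a, inverse k *s u)) ` (K - {0})"
    then obtain k where k: "k \<in> K" "k \<noteq> 0" "p = (k * a, inverse k *s u)" by blast
    have "inverse k *s u \<in> vecs_over K"
      using assms(2) k by (auto simp: vecs_over_def intro: mult_mem inverse_mem)
    with k scale_inverse_scale[OF k(2)] show "p \<in> {(b, v). v \<in> vecs_over K \<and> b *s v = a *s u}"
      by simp
  qed
  moreover have "inj_on (\<lambda>k. (k * a, inverse k *s u)) (K - {0})"
    by (rule inj_onI) (use assms(1) in simp)
  ultimately show ?thesis by (simp add: card_image)
qed

lemma scale_image_rk_le_1:
  "(\<lambda>(a, u). a *s u) ` {(a, u). a \<noteq> 0 \<and> u \<in> vecs_over K \<and> u \<noteq> 0 \<and> P (a *s u)}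
     = {e :: 'a ^ 'n. e \<noteq> 0 \<and> rk K e \<le> 1 \<and> P e}"
proof (intro equalityI subsetI)
  fix e assume "e \<in> (\<lambda>(a, u). a *s u) ` {(a, u). a \<noteq> 0 \<and> u \<in> vecs_over K \<and> u \<noteq> 0 \<and> P (a *s u)}"
  then obtain p where "p \<in> {(a, u). a \<noteq> 0 \<and> u \<in> vecs_over K \<and> u \<noteq> 0 \<and> P (a *s u)}"
    and "e = (\<lambda>(a, u). a *s u) p" by (rule imageE)
  then obtain a u where "a \<noteq> 0" "u \<in> vecs_over K" "u \<noteq> 0" "P (a *s u)" "e = a *s u"
    by (cases p) auto
  with rk_scale_le_1 show "e \<in> {e. e \<noteq> 0 \<and> rk K e \<le> 1 \<and> P e}" by simp
next
  fix e assume e: "e \<in> {e. e \<noteq> 0 \<and> rk K e \<le> 1 \<and> P e}"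
  then have "rk K e \<le> 1" "e \<noteq> 0" by simp_all
  then obtain a u where "a \<noteq> 0" "u \<in> vecs_over K" "e = a *s u" by (rule rk_le_1_imp_scale)
  with e show "e \<in> (\<lambda>(a, u). a *s u) ` {(a, u). a \<noteq> 0 \<and> u \<in> vecs_over K \<and> u \<noteq> 0 \<and> P (a *s u)}"
    by (auto intro!: image_eqI[of _ _ "(a, u)"])
qed

lemma card_rank1_reps:
  "card {(a, u). a \<noteq> 0 \<and> u \<in> vecs_over K \<and> u \<noteq> 0 \<and> P (a *s u)}
     = (card K - 1) * card {e :: 'a ^ 'n. e \<noteq> 0 \<and> rk K e \<le> 1 \<and> P e}"
    (is "card ?D = _")
proof -
  have "{p \<in> ?D. (\<lambda>(a, u). a *s u) p = a *s u} = {(b, v). v \<in> vecs_over K \<and> b *s v = a *s u}"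
    if "(a, u) \<in> ?D" for a u
    using that by auto
  then have "card {p \<in> ?D. (\<lambda>(a, u). a *s u) p = (\<lambda>(a, u). a *s u) d} = card K - 1" if "d \<in> ?D" for d
    using that card_scale_fibre by (cases d) auto
  with card_eq_mult_card_image[of ?D "\<lambda>(a, u). a *s u" "card K - 1"]
  have "card ?D = (card K - 1) * card ((\<lambda>(a, u). a *s u) ` ?D)" by simp
  then show ?thesis by (simp only: scale_image_rk_le_1)
qed

end

locale rank_basis = finite_subfield K for K :: "'a::{finite,field} set" +
  fixes x :: "'a ^ 'n" and S :: "'n set" and C :: "'n \<Rightarrow> 'n \<Rightarrow> 'a"
  assumes indep: "lin_indep_over K (\<lambda>i. x $ i) S"
    and card_basis: "card S = rk K x"
    and coord_mem: "i \<in> S \<Longrightarrow> C j i \<in> K"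
    and coord_expansion: "(\<Sum>i\<in>S. C j i * x $ i) = x $ j"
begin

abbreviation x_span :: "'a set" where
  "x_span \<equiv> span_over K (\<lambda>i. x $ i) S"

text \<open>The vectors over K obeying the K-linear relations among the coordinates of x, each
  coordinate x $ j being expressed through those indexed by S via the coefficients C j.\<close>

definition x_compatible :: "('a ^ 'n) set" where
  "x_compatible = {u \<in> vecs_over K. \<forall>j. (\<Sum>i\<in>S. C j i * u $ i) = u $ j}"

lemma coord_basis:
  assumes "j \<in> S" "i \<in> S"
  shows "C j i = (if i = j then 1 else 0)"
proof -
  have "\<forall>i\<in>S. C j i - (if i = j then 1 else 0) \<in> K"
    by (simp add: coord_mem diff_mem)
  moreover have "(\<Sum>i\<in>S. (C j i - (if i = j then 1 else 0)) * x $ i) = 0"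
    using coord_expansion[of j] assms(1)
    by (simp add: left_diff_distrib sum_subtractf sum_delta_mult)
  ultimately have "C j i - (if i = j then 1 else 0) = 0"
    using assms(2) by (rule lin_indep_overD[OF indep])
  then show ?thesis by simp
qed

lemma sum_coord_basis: "j \<in> S \<Longrightarrow> (\<Sum>i\<in>S. C j i * g i) = g j"
  by (simp add: coord_basis sum_delta_mult cong: sum.cong)

lemma x_in_span: "x $ j \<in> x_span"
  unfolding span_over_def using coord_expansion[symmetric] coord_mem by blast

lemma card_x_span: "card x_span = card K ^ rk K x"
  using card_span_over_indep[OF _ indep] card_basis by simp

lemma bij_betw_restrict_x_compatible:
  "bij_betw (\<lambda>u. restrict (\<lambda>i. u $ i) S) x_compatible (S \<rightarrow>\<^sub>E K)"
proof -
  define g where "g w = (\<chi> j. \<Sum>i\<in>S. C j i * w i)" for w :: "'n \<Rightarrow> 'a"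
  have g_basis: "g w $ i = w i" if "i \<in> S" for w i
    unfolding g_def using that by (simp add: sum_coord_basis)
  have "g (restrict (\<lambda>i. u $ i) S) = u" if "u \<in> x_compatible" for u
  proof -
    have "(\<Sum>i\<in>S. C j i * restrict (\<lambda>i. u $ i) S i) = (\<Sum>i\<in>S. C j i * u $ i)" for j
      by (rule sum.cong) simp_all
    also have "\<dots> j = u $ j" for j using that by (simp add: x_compatible_def)
    finally show ?thesis by (simp add: g_def vec_eq_iff)
  qed
  moreover have "restrict (\<lambda>i. g w $ i) S = w" if "w \<in> S \<rightarrow>\<^sub>E K" for w
  proof
    fix i show "restrict (\<lambda>i. g w $ i) S i = w i"
      by (cases "i \<in> S") (simp_all add: g_basis PiE_arb[OF that])
  qed
  moreover have "(\<lambda>u. restrict (\<lambda>i. u $ i) S) ` x_compatible \<subseteq> S \<rightarrow>\<^sub>E K"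
    by (auto simp: x_compatible_def vecs_over_def)
  moreover have "g ` (S \<rightarrow>\<^sub>E K) \<subseteq> x_compatible"
  proof (rule image_subsetI)
    fix w assume w: "w \<in> S \<rightarrow>\<^sub>E K"
    have "w i \<in> K" if "i \<in> S" for i using w that by auto
    then have "g w $ j \<in> K" for j
      unfolding g_def by (auto intro!: sum_mem mult_mem coord_mem)
    moreover have "(\<Sum>i\<in>S. C j i * g w $ i) = g w $ j" for j
      by (simp add: g_basis) (simp add: g_def)
    ultimately show "g w \<in> x_compatible" by (simp add: x_compatible_def vecs_over_def)
  qed
  ultimately show ?thesis by (intro bij_betw_byWitness[where f' = g]) auto
qed

lemma card_x_compatible: "card x_compatible = card K ^ rk K x"
  using bij_betw_same_card[OF bij_betw_restrict_x_compatible] card_basis by (simp add: card_funcsetE)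

lemma rk_diff_scale_le_of_span:
  assumes "a \<in> x_span" "u \<in> vecs_over K"
  shows "rk K (x - a *s u) \<le> rk K x"
proof -
  have "(x - a *s u) $ j \<in> x_span" for j
    using span_over_diff[OF x_in_span span_over_mult[OF assms(1), of "u $ j"]] assms(2)
    by (simp add: vecs_over_def mult.commute)
  then have "rk K (x - a *s u) \<le> card S" by (rule rk_le_card_span[rotated]) simp
  with card_basis show ?thesis by simp
qed

lemma rk_diff_scale_le_of_compatible:
  assumes "u \<in> x_compatible"
  shows "rk K (x - a *s u) \<le> rk K x"
proof -
  have "(\<Sum>i\<in>S. C j i * (x - a *s u) $ i) = (\<Sum>i\<in>S. C j i * x $ i) - a * (\<Sum>i\<in>S. C j i * u $ i)"
    for j by (simp add: right_diff_distrib sum_subtractf sum_distrib_left mult.left_commute)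
  also have "\<dots> j = (x - a *s u) $ j" for j
    using coord_expansion[of j] assms by (simp add: x_compatible_def)
  finally have "(x - a *s u) $ j \<in> span_over K (\<lambda>i. (x - a *s u) $ i) S" for j
    unfolding span_over_def using coord_mem by (auto intro!: exI[of _ "C j"])
  then have "rk K (x - a *s u) \<le> card S" by (rule rk_le_card_span[rotated]) simp
  with card_basis show ?thesis by simp
qed

lemma relation_coeffs:
  assumes "j \<notin> S" "\<forall>i\<in>insert j S. d i \<in> K" "(\<Sum>i\<in>insert j S. d i * x $ i) = 0" "i \<in> S"
  shows "d i = - d j * C j i"
proof -
  have coeffs_mem: "\<forall>i\<in>S. d i + d j * C j i \<in> K"
    using assms(2) by (simp add: add_mem mult_mem coord_mem)
  have "(\<Sum>i\<in>S. (d i + d j * C j i) * x $ i) = (\<Sum>i\<in>S. d i * x $ i) + d j * (\<Sum>i\<in>S. C j i * x $ i)"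
    by (simp add: distrib_right sum.distrib sum_distrib_left mult.assoc)
  also have "\<dots> = (\<Sum>i\<in>insert j S. d i * x $ i)" using assms(1) by (simp add: coord_expansion)
  finally have "(\<Sum>i\<in>S. (d i + d j * C j i) * x $ i) = 0" using assms(3) by simp
  from lin_indep_overD[OF indep coeffs_mem this assms(4)] have "d i + d j * C j i = 0" .
  then show ?thesis by (simp add: add_eq_0_iff)
qed

text \<open>A relation among the coordinates of x - a *s u with nonzero u-part would put a into
  x_span. So it is a relation among the coordinates of x, hence by relation_coeffs a multiple of
  the one defining C j, which u violates.\<close>

lemma indep_diff_scale:
  assumes a: "a \<notin> x_span" and u: "u \<in> vecs_over K" and j: "(\<Sum>i\<in>S. C j i * u $ i) \<noteq> u $ j"
  shows "lin_indep_over K (\<lambda>i. (x - a *s u) $ i) (insert j S)"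
  unfolding lin_indep_over_def
proof (intro allI impI)
  fix d assume "(\<forall>i\<in>insert j S. d i \<in> K) \<and> (\<Sum>i\<in>insert j S. d i * (x - a *s u) $ i) = 0"
  then have d: "\<forall>i\<in>insert j S. d i \<in> K"
    and rel: "(\<Sum>i\<in>insert j S. d i * x $ i) - a * (\<Sum>i\<in>insert j S. d i * u $ i) = 0"
    by (simp_all add: right_diff_distrib sum_subtractf sum_distrib_left mult.left_commute)
  have "j \<notin> S" using j sum_coord_basis by auto
  define \<beta> where "\<beta> = (\<Sum>i\<in>insert j S. d i * u $ i)"
  have "\<beta> = 0"
  proof (rule ccontr)
    assume "\<beta> \<noteq> 0"
    with rel have "a = (\<Sum>i\<in>insert j S. d i * x $ i) / \<beta>" by (simp add: \<beta>_def field_simps)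
    also have "\<dots> = (\<Sum>i\<in>insert j S. (d i / \<beta>) * x $ i)" by (simp add: sum_divide_distrib)
    also have "\<dots> \<in> x_span"
    proof (rule span_over_lincomb)
      have "\<beta> \<in> K" unfolding \<beta>_def using d u by (auto simp: vecs_over_def intro!: sum_mem mult_mem)
      with d show "d i / \<beta> \<in> K \<and> x $ i \<in> x_span" if "i \<in> insert j S" for i
        using that x_in_span by (blast intro: divide_mem)
    qed
    finally show False using a by simp
  qed
  with rel have "(\<Sum>i\<in>insert j S. d i * x $ i) = 0" by (simp add: \<beta>_def)
  with \<open>j \<notin> S\<close> d have d_S: "d i = - d j * C j i" if "i \<in> S" for i
    using relation_coeffs that by blast
  have "(\<Sum>i\<in>S. d i * u $ i) = - d j * (\<Sum>i\<in>S. C j i * u $ i)"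
    by (simp add: d_S sum_distrib_left mult.assoc cong: sum.cong)
  with \<open>\<beta> = 0\<close> \<open>j \<notin> S\<close> have "d j * (u $ j - (\<Sum>i\<in>S. C j i * u $ i)) = 0"
    by (simp add: \<beta>_def algebra_simps)
  with j have "d j = 0" by simp
  with d_S show "\<forall>i\<in>insert j S. d i = 0" by simp
qed

lemma rk_diff_scale_le_iff:
  assumes "u \<in> vecs_over K"
  shows "rk K (x - a *s u) \<le> rk K x \<longleftrightarrow> a \<in> x_span \<or> u \<in> x_compatible"
proof
  assume le: "rk K (x - a *s u) \<le> rk K x"
  show "a \<in> x_span \<or> u \<in> x_compatible"
  proof (rule ccontr)
    assume "\<not> (a \<in> x_span \<or> u \<in> x_compatible)"
    then obtain j where a: "a \<notin> x_span" and j: "(\<Sum>i\<in>S. C j i * u $ i) \<noteq> u $ j"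
      using assms by (auto simp: x_compatible_def)
    then have "j \<notin> S" using sum_coord_basis by auto
    with card_basis have "card (insert j S) = Suc (rk K x)" by simp
    moreover have "card (insert j S) \<le> rk K (x - a *s u)"
      by (rule card_le_rk) (rule indep_diff_scale[OF a assms j])
    ultimately show False using le by simp
  qed
next
  assume "a \<in> x_span \<or> u \<in> x_compatible"
  then show "rk K (x - a *s u) \<le> rk K x"
    using rk_diff_scale_le_of_span[OF _ assms] rk_diff_scale_le_of_compatible by blast
qed

lemma card_scale_pairs:
  "card {(a, u). a \<noteq> 0 \<and> u \<in> vecs_over K \<and> u \<noteq> 0 \<and> rk K (x - a *s u) \<le> rk K x}
     = (card K ^ rk K x - 1) * (card K ^ CARD('n) - 1)
       + (CARD('a) - card K ^ rk K x) * (card K ^ rk K x - 1)"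
proof -
  have compatible_sub: "x_compatible \<subseteq> vecs_over K" by (auto simp: x_compatible_def)
  have zero_vecs: "(0 :: 'a ^ 'n) \<in> vecs_over K" "0 \<in> x_compatible" by (simp_all add: x_compatible_def vecs_over_def)
  have "{(a, u). a \<noteq> 0 \<and> u \<in> vecs_over K \<and> u \<noteq> 0 \<and> rk K (x - a *s u) \<le> rk K x}
      = (x_span - {0}) \<times> (vecs_over K - {0}) \<union> (UNIV - x_span) \<times> (x_compatible - {0})"
    using compatible_sub by (auto simp: rk_diff_scale_le_iff)
  moreover have "card ((x_span - {0}) \<times> (vecs_over K - {0} :: ('a ^ 'n) set))
      = (card K ^ rk K x - 1) * (card K ^ CARD('n) - 1)"
    by (simp add: card_cartesian_product card_x_span card_vecs_over zero_vecs)
  moreover have "card ((UNIV - x_span) \<times> (x_compatible - {0}))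
      = (CARD('a) - card K ^ rk K x) * (card K ^ rk K x - 1)"
    by (simp add: card_cartesian_product card_Diff_subset card_x_span card_x_compatible zero_vecs)
  moreover have "(x_span - {0}) \<times> (vecs_over K - {0}) \<inter> (UNIV - x_span) \<times> (x_compatible - {0}) = {}"
    by blast
  ultimately show ?thesis by (simp add: card_Un_disjoint)
qed

end

context finite_subfield
begin

lemma rank_basis_exists:
  obtains S C where "rank_basis K x S C"
proof -
  obtain S where S: "lin_indep_over K (\<lambda>i. x $ i) S" "card S = rk K x" by (rule rk_witness)
  have "\<exists>c. (\<forall>i\<in>S. c i \<in> K) \<and> (\<Sum>i\<in>S. c i * x $ i) = x $ j" for j
  proof -
    obtain c where "x $ j = (\<Sum>i\<in>S. c i * x $ i)" "\<forall>i\<in>S. c i \<in> K"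
      using maximal_indep_spans[OF S, of j] unfolding span_over_def by blast
    then show ?thesis by (intro exI[of _ c]) simp
  qed
  then obtain C where C: "\<forall>j. (\<forall>i\<in>S. C j i \<in> K) \<and> (\<Sum>i\<in>S. C j i * x $ i) = x $ j"
    using choice[of "\<lambda>j c. (\<forall>i\<in>S. c i \<in> K) \<and> (\<Sum>i\<in>S. c i * x $ i) = x $ j"] by blast
  have "rank_basis K x S C"
    by unfold_locales (use S C in auto)
  then show thesis by (rule that)
qed

lemma card_pow_rk_le: "card K ^ rk K x \<le> CARD('a)"
proof -
  obtain S C where "rank_basis K x S C" by (rule rank_basis_exists)
  then interpret rank_basis K x S C .
  show ?thesis using card_x_span card_mono[of UNIV x_span] by simp
qed

lemma card_rank1_perturbations:
  fixes x :: "'a ^ 'n"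
  shows "(card K - 1) * card {e. e \<noteq> 0 \<and> rk K e \<le> 1 \<and> rk K (x - e) \<le> rk K x}
     = (card K ^ rk K x - 1) * (card K ^ CARD('n) - 1)
       + (CARD('a) - card K ^ rk K x) * (card K ^ rk K x - 1)"
proof -
  obtain S C where "rank_basis K x S C" by (rule rank_basis_exists)
  then interpret rank_basis K x S C .
  show ?thesis using card_rank1_reps[of "\<lambda>e. rk K (x - e) \<le> rk K x"] card_scale_pairs by simp
qed

end

lemma gauss_binom1_mult: "2 \<le> q \<Longrightarrow> (int q - 1) * gauss_binom1 q k = int q ^ k - 1"
  unfolding gauss_binom1_def by (simp add: power_diff_1_eq)

lemma int_eq_gauss_binom1_combination:
  assumes "2 \<le> q" "q ^ r \<le> q ^ m"
    and "(q - 1) * N = (q ^ r - 1) * (q ^ n - 1) + (q ^ m - q ^ r) * (q ^ r - 1)"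
  shows "int N = (int q ^ m - int q ^ r) * gauss_binom1 q r + (int q ^ r - 1) * gauss_binom1 q n"
proof -
  have "1 \<le> q" "1 \<le> q ^ r" "1 \<le> q ^ n" using assms(1) by simp_all
  with assms(2) have "int ((q - 1) * N) = (int q - 1) * int N"
    and "int ((q ^ r - 1) * (q ^ n - 1) + (q ^ m - q ^ r) * (q ^ r - 1))
      = (int q ^ r - 1) * (int q ^ n - 1) + (int q ^ m - int q ^ r) * (int q ^ r - 1)"
    by (simp_all add: of_nat_diff)
  with assms(3) have "(int q - 1) * int N
      = (int q ^ r - 1) * (int q ^ n - 1) + (int q ^ m - int q ^ r) * (int q ^ r - 1)"
    by simp
  also have "\<dots> = (int q ^ m - int q ^ r) * ((int q - 1) * gauss_binom1 q r)
      + (int q ^ r - 1) * ((int q - 1) * gauss_binom1 q n)"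
    unfolding gauss_binom1_mult[OF assms(1)] by (simp add: algebra_simps)
  also have "\<dots> = (int q - 1) * ((int q ^ m - int q ^ r) * gauss_binom1 q r + (int q ^ r - 1) * gauss_binom1 q n)"
    by (simp add: algebra_simps)
  finally show ?thesis using assms(1) by simp
qed

theorem proposition3:
  fixes K :: "'a::{finite,field} set" and q m r :: nat
    and c1 c2 :: "'a ^ 'n::finite"
  assumes "is_subfield K"
    and "q = card K"
    and "CARD('a) = q ^ m"
    and "rank_dist K c1 c2 = r"
  shows "int (card (rank_ball K r c1 \<inter> rank_ball K 1 c2)) =
           1 + (int q ^ m - int q ^ r) * gauss_binom1 q r
             + (int q ^ r - 1) * gauss_binom1 q CARD('n)"
proof -
  interpret finite_subfield K by unfold_locales (fact assms(1))
  define x where "x = c1 - c2"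
  have r: "rk K x = r" using assms(4) by (simp add: x_def rank_dist_def)
  define E where "E = {e. e \<noteq> 0 \<and> rk K e \<le> 1 \<and> rk K (x - e) \<le> r}"
  have "rank_ball K r c1 \<inter> rank_ball K 1 c2 = (\<lambda>e. c2 + e) ` insert 0 E"
    using rk_scale_le_1[of 0 0] r by (auto simp: rank_ball_inter_eq_translate E_def x_def vecs_over_def)
  then have "card (rank_ball K r c1 \<inter> rank_ball K 1 c2) = card (insert 0 E)"
    by (simp only: card_image[OF inj_on_add])
  also have "\<dots> = 1 + card E" by (simp add: E_def)
  finally have "card (rank_ball K r c1 \<inter> rank_ball K 1 c2) = 1 + card E" .
  moreover have "(q - 1) * card E = (q ^ r - 1) * (q ^ CARD('n) - 1) + (q ^ m - q ^ r) * (q ^ r - 1)"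
    using card_rank1_perturbations[of x] assms(2,3) r by (simp add: E_def)
  ultimately show ?thesis
    using int_eq_gauss_binom1_combination card_ge_2 card_pow_rk_le[of x] assms(2,3) r by simp
qed

end
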